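(* Let $\varphi(x)=\frac{1}{\sqrt2}e^{-x^2/2}$ and define $\sigma:\mathbb R\to\mathbb R$ by $\sigma(x)=\sum_{j=1}^\infty\varphi(x-j)$. Then $\sigma$ is $1$-Lipschitz, nonnegative, bounded above by $2.5$, and $\lim_{x\to-\infty}\sigma(x)=0$. *)

theory Defs
  imports "HOL-Analysis.Analysis"
begin

definition phi :: "real \<Rightarrow> real" where
  "phi x = (1 / sqrt 2) * exp (- (x^2) / 2)"

definition sigma :: "real \<Rightarrow> real" where
  "sigma x = (\<Sum>n. phi (x - real (Suc n)))"

end

theory Submission
  imports Defs "HOL-Real_Asymp.Real_Asymp"
begin

(* With gauss y = exp (-y^2/2) we have phi = gauss / sqrt 2. Splitting the arguments x - j,
   j >= 1, at 0 turns sigma x, and the termwise derivative sum_j -(x - j) phi (x - j), into two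
   one-sided sums of the form sum_k F (s + k) with s >= 0, for F = gauss resp. F y = y gauss y;
   for the derivative the two sums enter with opposite signs. Beyond y = 2 both F decay at
   least geometrically (ratios 1/10 resp. 1/4), so evaluating a few terms gives
   sum_k gauss (s + k) <= 1.7575 and sum_k (s + k) gauss (s + k) <= 1.41. Hence
   sigma <= 2 * 1.7575 / sqrt 2 < 2.5 and |sigma'| <= 1.41 / sqrt 2 < 1. For x <= 0,
   gauss (a + b) <= gauss a * gauss b gives sigma x <= 2 gauss (1 - x), which tends to 0. *)

lemma exp_ge_Taylor_partial_sum:
  fixes x :: real
  assumes "0 \<le> x"
  shows "(\<Sum>k<n. x ^ k / fact k) \<le> exp x"
proof -
  have "summable (\<lambda>k. x ^ k / fact k)" and "exp x = (\<Sum>k. x ^ k / fact k)"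
    using exp_converges[of x] by (auto simp: sums_iff divide_inverse_commute)
  then show ?thesis
    using assms by (auto intro!: sum_le_suminf)
qed

lemma exp_neg_le_divide: "0 < (c :: real) \<Longrightarrow> c \<le> exp a \<Longrightarrow> exp (- a) \<le> 1 / c"
  unfolding exp_minus inverse_eq_divide by (intro divide_left_mono) auto

lemma suminf_le_ratio_tail:
  fixes f :: "nat \<Rightarrow> real"
  assumes nonneg: "\<And>k. 0 \<le> f k"
    and ratio: "\<And>k. N \<le> k \<Longrightarrow> f (Suc k) \<le> r * f k"
    and r: "0 \<le> r" "r < 1"
  shows "summable f" "suminf f \<le> (\<Sum>k<N. f k) + f N / (1 - r)"
proof -
  have geometric_bound: "f (k + N) \<le> f N * r ^ k" for k
  proof (induction k)
    case (Suc k)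
    have "f (Suc k + N) \<le> r * f (k + N)" using ratio[of "k + N"] by simp
    also have "\<dots> \<le> r * (f N * r ^ k)" using Suc r(1) by (rule mult_left_mono)
    finally show ?case by (simp add: algebra_simps)
  qed simp
  have "norm r < 1" using r by simp
  from sums_mult[OF geometric_sums[OF this], of "f N"]
  have geometric: "(\<lambda>k. f N * r ^ k) sums (f N / (1 - r))" by simp
  have tail: "summable (\<lambda>k. f (k + N))"
    using geometric_bound nonneg
    by (intro summable_comparison_test'[OF sums_summable[OF geometric]]) auto
  then show "summable f" by (rule summable_iff_shift[THEN iffD1])
  have "(\<Sum>k. f (k + N)) \<le> f N / (1 - r)"
    using sums_le[OF geometric_bound summable_sums[OF tail] geometric] .
  then show "suminf f \<le> (\<Sum>k<N. f k) + f N / (1 - r)"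
    using suminf_split_initial_segment[OF \<open>summable f\<close>, of N] by simp
qed

definition gauss :: "real \<Rightarrow> real" where
  "gauss y = exp (- (y ^ 2) / 2)"

lemma phi_eq_gauss: "phi y = gauss y / sqrt 2"
  by (simp add: phi_def gauss_def)

lemma gauss_pos: "0 < gauss y"
  by (simp add: gauss_def)

lemma gauss_le_1: "gauss y \<le> 1"
  by (simp add: gauss_def)

lemma gauss_minus: "gauss (- y) = gauss y"
  by (simp add: gauss_def)

lemma gauss_antimono: "0 \<le> a \<Longrightarrow> a \<le> b \<Longrightarrow> gauss b \<le> gauss a"
  by (simp add: gauss_def power_mono)

lemma gauss_add_le_mult: "0 \<le> a \<Longrightarrow> 0 \<le> b \<Longrightarrow> gauss (a + b) \<le> gauss a * gauss b"
  by (simp add: gauss_def flip: exp_add) (simp add: power2_eq_square field_simps)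

lemma gauss_add_1: "gauss (y + 1) = gauss y * exp (- y - 1/2)"
  by (simp add: gauss_def flip: exp_add) (simp add: power2_eq_square field_simps)

lemma gauss_has_derivative: "(gauss has_real_derivative - (y * gauss y)) (at y within S)"
  unfolding gauss_def[abs_def] by (auto intro!: derivative_eq_intros simp: algebra_simps)

lemma gauss_1_le: "gauss 1 \<le> 0.6066"
proof -
  have "1.64854 \<le> exp (1/2 :: real)"
    using exp_ge_Taylor_partial_sum[of "1/2" 6] by (simp add: numeral_eq_Suc)
  from exp_neg_le_divide[OF _ this] show ?thesis by (simp add: gauss_def)
qed

lemma gauss_2_le: "gauss 2 \<le> 0.13541"
proof -
  have "7.385 \<le> exp (2 :: real)"
    using exp_ge_Taylor_partial_sum[of 2 10] by (simp add: numeral_eq_Suc)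
  from exp_neg_le_divide[OF _ this] show ?thesis by (simp add: gauss_def)
qed

lemma gauss_7_div_5_le: "gauss (7/5) \<le> 0.39286"
proof -
  have "2.5455 \<le> exp (49/50 :: real)"
    using exp_ge_Taylor_partial_sum[of "49/50" 5] by (simp add: numeral_eq_Suc)
  from exp_neg_le_divide[OF _ this] show ?thesis by (simp add: gauss_def power_divide)
qed

lemma gauss_12_div_5_le: "gauss (12/5) \<le> 1/16"
proof -
  have "16 \<le> exp (72/25 :: real)"
    using exp_ge_Taylor_partial_sum[of "72/25" 8] by (simp add: numeral_eq_Suc)
  from exp_neg_le_divide[OF _ this] show ?thesis by (simp add: gauss_def power_divide)
qed

lemma gauss_add_1_le:
  assumes "2 \<le> y"
  shows "gauss (y + 1) \<le> gauss y / 10"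
proof -
  have "10 \<le> exp (5/2 :: real)"
    using exp_ge_Taylor_partial_sum[of "5/2" 8] by (simp add: numeral_eq_Suc)
  have "exp (- y - 1/2) \<le> exp (- (5/2))" using assms by simp
  also have "\<dots> \<le> 1/10" using exp_neg_le_divide[OF _ \<open>10 \<le> exp (5/2)\<close>] by simp
  finally have "gauss y * exp (- y - 1/2) \<le> gauss y * (1/10)"
    by (rule mult_left_mono) (use gauss_pos[of y] in simp)
  then show ?thesis by (simp add: gauss_add_1)
qed

lemma mult_gauss_le: "y * gauss y \<le> gauss 1"
proof -
  have "y \<le> 1 + (y\<^sup>2 - 1) / 2"
    using zero_le_power2[of "y - 1"] by (simp add: power2_eq_square field_simps)
  also have "\<dots> \<le> exp ((y\<^sup>2 - 1) / 2)" by (rule exp_ge_add_one_self)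
  finally have "y * gauss y \<le> exp ((y\<^sup>2 - 1) / 2) * gauss y"
    by (rule mult_right_mono) (use gauss_pos[of y] in simp)
  also have "\<dots> = gauss 1"
    by (simp add: gauss_def flip: exp_add) (simp add: field_simps)
  finally show ?thesis .
qed

lemma mult_gauss_antimono:
  assumes "1 \<le> a" "a \<le> b"
  shows "b * gauss b \<le> a * gauss a"
proof -
  have "(b - a) / a \<le> b - a"
    using assms by (simp add: divide_le_eq mult_le_cancel_left1)
  also have "\<dots> \<le> (b\<^sup>2 - a\<^sup>2) / 2"
    using assms mult_left_mono[of 2 "b + a" "b - a"] by (simp add: power2_eq_square algebra_simps)
  finally have "b / a \<le> 1 + (b\<^sup>2 - a\<^sup>2) / 2"
    using assms by (simp add: diff_divide_distrib)
  also have "\<dots> \<le> exp ((b\<^sup>2 - a\<^sup>2) / 2)" by (rule exp_ge_add_one_self)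
  finally have "b * gauss b \<le> a * exp ((b\<^sup>2 - a\<^sup>2) / 2) * gauss b"
    using assms
    by (intro mult_right_mono) (auto simp: divide_le_eq mult.commute gauss_pos less_imp_le)
  also have "\<dots> = a * gauss a"
    by (simp add: gauss_def mult.assoc flip: exp_add) (simp add: field_simps)
  finally show ?thesis .
qed

lemma mult_gauss_add_1_le:
  assumes "2 \<le> y"
  shows "(y + 1) * gauss (y + 1) \<le> y * gauss y / 4"
proof -
  have "(y + 1) * gauss (y + 1) \<le> (y + 1) * (gauss y / 10)"
    using assms gauss_add_1_le by (intro mult_left_mono) auto
  also have "\<dots> \<le> y * gauss y / 4"
    using assms gauss_pos[of y] by (simp add: field_simps)
  finally show ?thesis .
qed

lemma gauss_lattice_sum:
  shows "summable (\<lambda>k. gauss (real k))" "(\<Sum>k. gauss (real k)) \<le> 1.7575"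
proof -
  have "0 \<le> gauss (real k)" for k by (simp add: gauss_pos less_imp_le)
  moreover have "gauss (real (Suc k)) \<le> 1/10 * gauss (real k)" if "2 \<le> k" for k
    using gauss_add_1_le[of "real k"] that by (simp add: add.commute)
  ultimately have "summable (\<lambda>k. gauss (real k))"
    and "(\<Sum>k. gauss (real k)) \<le> (\<Sum>k<2. gauss (real k)) + gauss 2 / (1 - 1/10)"
    using suminf_le_ratio_tail[of "\<lambda>k. gauss (real k)" 2 "1/10"] by auto
  then show "summable (\<lambda>k. gauss (real k))" "(\<Sum>k. gauss (real k)) \<le> 1.7575"
    using gauss_1_le gauss_2_le by (simp_all add: numeral_2_eq_2 gauss_def)
qed

lemma gauss_shifted_lattice_sum:
  assumes "0 \<le> s"
  shows "summable (\<lambda>k. gauss (s + real k))" "(\<Sum>k. gauss (s + real k)) \<le> 1.7575"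
proof -
  have le: "gauss (s + real k) \<le> gauss (real k)" for k
    using assms by (intro gauss_antimono) auto
  show summable: "summable (\<lambda>k. gauss (s + real k))"
    using le gauss_pos
    by (intro summable_comparison_test'[OF gauss_lattice_sum(1)]) (auto simp: less_imp_le)
  have "(\<Sum>k. gauss (s + real k)) \<le> (\<Sum>k. gauss (real k))"
    using le summable gauss_lattice_sum(1) by (rule suminf_le)
  with gauss_lattice_sum(2) show "(\<Sum>k. gauss (s + real k)) \<le> 1.7575" by simp
qed

lemma mult_gauss_shifted_lattice_sum:
  assumes "0 \<le> s"
  shows "summable (\<lambda>k. (s + real k) * gauss (s + real k))"
    "(\<Sum>k. (s + real k) * gauss (s + real k)) \<le> 1.41"
proof -
  define f where "f k = (s + real k) * gauss (s + real k)" for k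
  have "0 \<le> f k" for k using assms by (simp add: f_def gauss_pos less_imp_le)
  moreover have "f (Suc k) \<le> 1/4 * f k" if "2 \<le> k" for k
    using mult_gauss_add_1_le[of "s + real k"] that assms by (simp add: f_def ac_simps)
  ultimately have "summable f" and sum_le: "suminf f \<le> f 0 + f 1 + 4/3 * f 2"
    using suminf_le_ratio_tail[of f 2 "1/4"] by (auto simp: numeral_2_eq_2)
  \<comment> \<open>Bounding both f 0 and f 1 by the peak value gauss 1 would be too crude: only one
      of s, s + 1 can be close to the peak at 1.\<close>
  have "f 0 + f 1 + 4/3 * f 2 \<le> 1.41"
  proof (cases "s \<le> 2/5")
    case True
    have "f 0 \<le> 2/5" unfolding f_def using True mult_left_le[OF gauss_le_1[of s] assms] by simp
    moreover have "f 1 \<le> 0.6066"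
      using order_trans[OF mult_gauss_le[of "s + 1"] gauss_1_le] by (simp add: f_def)
    moreover have "f 2 \<le> 2 * gauss 2"
      using assms mult_gauss_antimono[of 2 "s + 2"] by (simp add: f_def)
    ultimately show ?thesis using gauss_2_le by simp
  next
    case False
    have "f 0 \<le> 0.6066" using order_trans[OF mult_gauss_le[of s] gauss_1_le] by (simp add: f_def)
    moreover have "f 1 \<le> 7/5 * gauss (7/5)"
      using False mult_gauss_antimono[of "7/5" "s + 1"] by (simp add: f_def)
    moreover have "f 2 \<le> 12/5 * gauss (12/5)"
      using False mult_gauss_antimono[of "12/5" "s + 2"] by (simp add: f_def)
    ultimately show ?thesis using gauss_7_div_5_le gauss_12_div_5_le by simp
  qed
  with \<open>summable f\<close> sum_le show "summable (\<lambda>k. (s + real k) * gauss (s + real k))"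
    "(\<Sum>k. (s + real k) * gauss (s + real k)) \<le> 1.41"
    by (simp_all add: f_def[abs_def])
qed

(* The nonnegative arguments x - j are frac x + k for k < nat (floor x); the
   others are -(t + k) with t = nat (floor x) + 1 - x. *)
lemma shifted_series_split_at_floor:
  fixes F :: "real \<Rightarrow> real"
  assumes summable_neg: "\<And>t. 0 < t \<Longrightarrow> summable (\<lambda>k. F (- (t + real k)))"
  obtains m s t where "0 \<le> s" "0 < t" "summable (\<lambda>n. F (x - real (Suc n)))"
    "(\<Sum>n. F (x - real (Suc n))) = (\<Sum>k<m. F (s + real k)) + (\<Sum>k. F (- (t + real k)))"
proof -
  define m where "m = nat \<lfloor>x\<rfloor>"
  define t where "t = real m + 1 - x"
  have "0 < t" unfolding t_def m_def by linarith
  define T where "T n = F (x - real (Suc n))" for n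
  have tail: "(\<lambda>n. T (n + m)) = (\<lambda>k. F (- (t + real k)))"
    by (simp add: fun_eq_iff T_def t_def algebra_simps)
  have "summable T"
    using summable_neg[OF \<open>0 < t\<close>] summable_iff_shift[of T m] by (simp add: tail)
  have head: "(\<Sum>i<m. T i) = (\<Sum>k<m. F (frac x + real k))"
  proof -
    have "(\<Sum>i<m. T i) = (\<Sum>k<m. T (m - Suc k))" by (rule sum.nat_diff_reindex[symmetric])
    also have "\<dots> = (\<Sum>k<m. F (frac x + real k))"
    proof (rule sum.cong[OF refl])
      fix k assume "k \<in> {..<m}"
      then have "x - real (Suc (m - Suc k)) = frac x + real k"
        by (simp add: m_def frac_def)
      then show "T (m - Suc k) = F (frac x + real k)" by (simp add: T_def)
    qed
    finally show ?thesis .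
  qed
  have "(\<Sum>n. T n) = (\<Sum>n. T (n + m)) + (\<Sum>i<m. T i)"
    by (rule suminf_split_initial_segment[OF \<open>summable T\<close>])
  then have split: "(\<Sum>n. F (x - real (Suc n)))
      = (\<Sum>k<m. F (frac x + real k)) + (\<Sum>k. F (- (t + real k)))"
    unfolding tail head by (simp only: T_def add.commute)
  show thesis
  proof (rule that[of "frac x" t m])
    show "0 \<le> frac x" "0 < t" by (simp_all add: \<open>0 < t\<close>)
    show "summable (\<lambda>n. F (x - real (Suc n)))" using \<open>summable T\<close> by (simp add: T_def[abs_def])
  qed (rule split)
qed

lemma sqrt_2_ge: "1.41 \<le> sqrt (2 :: real)"
  by (rule real_le_rsqrt) (simp add: power2_eq_square)

lemma divide_sqrt_2_le: "0 \<le> a \<Longrightarrow> a / sqrt 2 \<le> a"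
  using sqrt_2_ge by (simp add: divide_le_eq mult_le_cancel_left1)

lemma summable_phi_neg: "0 < t \<Longrightarrow> summable (\<lambda>k. phi (- (t + real k)))"
  unfolding phi_eq_gauss gauss_minus using gauss_shifted_lattice_sum(1)[of t]
  by (simp add: summable_divide)

lemma sigma_eq_gauss_sums:
  obtains m s t where "0 \<le> s" "0 < t"
    "sigma x = ((\<Sum>k<m. gauss (s + real k)) + (\<Sum>k. gauss (t + real k))) / sqrt 2"
proof -
  obtain m s t where "0 \<le> s" "0 < t"
    and "sigma x = (\<Sum>k<m. phi (s + real k)) + (\<Sum>k. phi (- (t + real k)))"
    unfolding sigma_def by (rule shifted_series_split_at_floor[OF summable_phi_neg])
  moreover have "(\<Sum>k. phi (- (t + real k))) = (\<Sum>k. gauss (t + real k)) / sqrt 2"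
    unfolding phi_eq_gauss gauss_minus using gauss_shifted_lattice_sum(1)[of t] \<open>0 < t\<close>
    by (simp add: suminf_divide)
  ultimately show thesis
    by (intro that[of s t m]) (simp_all add: phi_eq_gauss sum_divide_distrib add_divide_distrib)
qed

lemma sigma_nonneg: "0 \<le> sigma x"
proof -
  obtain m s t where "0 \<le> s" "0 < t"
    and sigma: "sigma x = ((\<Sum>k<m. gauss (s + real k)) + (\<Sum>k. gauss (t + real k))) / sqrt 2"
    by (rule sigma_eq_gauss_sums)
  have "0 \<le> (\<Sum>k. gauss (t + real k))"
    using gauss_shifted_lattice_sum(1)[of t] \<open>0 < t\<close>
    by (intro suminf_nonneg) (auto simp: gauss_pos less_imp_le)
  moreover have "0 \<le> (\<Sum>k<m. gauss (s + real k))"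
    by (intro sum_nonneg) (simp add: gauss_pos less_imp_le)
  ultimately show ?thesis by (simp add: sigma)
qed

lemma sigma_le: "sigma x \<le> 2.5"
proof -
  obtain m s t where "0 \<le> s" "0 < t"
    and sigma: "sigma x = ((\<Sum>k<m. gauss (s + real k)) + (\<Sum>k. gauss (t + real k))) / sqrt 2"
    by (rule sigma_eq_gauss_sums)
  have "(\<Sum>k<m. gauss (s + real k)) \<le> (\<Sum>k. gauss (s + real k))"
    using gauss_shifted_lattice_sum(1)[OF \<open>0 \<le> s\<close>]
    by (intro sum_le_suminf) (auto simp: gauss_pos less_imp_le)
  then have "(\<Sum>k<m. gauss (s + real k)) + (\<Sum>k. gauss (t + real k)) \<le> 2 * 1.7575"
    using gauss_shifted_lattice_sum(2)[OF \<open>0 \<le> s\<close>] gauss_shifted_lattice_sum(2)[of t] \<open>0 < t\<close>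
    by simp
  also have "\<dots> \<le> 2.5 * sqrt 2"
    using sqrt_2_ge by simp
  finally show ?thesis by (simp add: sigma divide_le_eq)
qed

lemma phi_shift_has_derivative:
  "((\<lambda>y. phi (y - c)) has_real_derivative - ((y - c) * phi (y - c))) (at y within S)"
proof -
  have "((\<lambda>y. gauss (y - c) / sqrt 2) has_real_derivative - ((y - c) * gauss (y - c)) * 1 / sqrt 2)
      (at y within S)"
    by (intro DERIV_cdivide DERIV_chain2[OF gauss_has_derivative] derivative_eq_intros) auto
  then show ?thesis by (simp add: phi_eq_gauss)
qed

lemma abs_mult_phi_le: "\<bar>y * phi y\<bar> \<le> \<bar>y\<bar> * gauss \<bar>y\<bar>"
proof -
  have "\<bar>y * phi y\<bar> = \<bar>y\<bar> * gauss \<bar>y\<bar> / sqrt 2"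
    by (simp add: phi_eq_gauss abs_mult gauss_def)
  also have "\<dots> \<le> \<bar>y\<bar> * gauss \<bar>y\<bar>"
    by (rule divide_sqrt_2_le) (simp add: gauss_pos less_imp_le)
  finally show ?thesis .
qed

definition sigma_deriv :: "real \<Rightarrow> real" where
  "sigma_deriv x = (\<Sum>n. - ((x - real (Suc n)) * phi (x - real (Suc n))))"

lemma sigma_has_derivative: "(sigma has_real_derivative sigma_deriv x) (at x)"
proof -
  let ?S = "{x - 1..x + 1}"
  define N where "N = nat \<lceil>x\<rceil> + 1"
  have "x + 1 \<le> real N" unfolding N_def by linarith
  have "summable (\<lambda>n. (real N - x + real n) * gauss (real N - x + real n))"
    using \<open>x + 1 \<le> real N\<close> by (intro mult_gauss_shifted_lattice_sum(1)) simp
  then have summable_majorant: "summable (\<lambda>n. (real n - x) * gauss (real n - x))"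
    using summable_iff_shift[of "\<lambda>n. (real n - x) * gauss (real n - x)" N]
    by (simp add: algebra_simps)
  have majorant:
    "norm (- ((y - real (Suc n)) * phi (y - real (Suc n)))) \<le> (real n - x) * gauss (real n - x)"
    if "N \<le> n" "y \<in> ?S" for n y
  proof -
    have "1 \<le> real n - x" using that \<open>x + 1 \<le> real N\<close> by simp
    moreover have "real n - x \<le> real (Suc n) - y" using that by simp
    ultimately show ?thesis
      using order_trans[OF abs_mult_phi_le mult_gauss_antimono] by simp
  qed
  have "uniformly_convergent_on ?S (\<lambda>n y. \<Sum>i<n. - ((y - real (Suc i)) * phi (y - real (Suc i))))"
    by (intro Weierstrass_m_test'_ev[OF _ summable_majorant] eventually_sequentiallyI[of N]
        ballI majorant)
  moreover have "summable (\<lambda>n. phi (x - real (Suc n)))"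
    by (rule shifted_series_split_at_floor[OF summable_phi_neg])
  ultimately have "((\<lambda>x. \<Sum>n. phi (x - real (Suc n))) has_real_derivative
      (\<Sum>n. - ((x - real (Suc n)) * phi (x - real (Suc n))))) (at x)"
    by (intro has_field_derivative_series'(2)[of ?S _ _ x] phi_shift_has_derivative) auto
  then show ?thesis by (simp add: sigma_def[abs_def] sigma_deriv_def)
qed

lemma abs_sigma_deriv_le: "\<bar>sigma_deriv x\<bar> \<le> 1"
proof -
  have neg_terms: "- (- y * phi (- y)) = y * gauss y / sqrt 2" for y
    by (simp add: phi_eq_gauss gauss_minus)
  have "summable (\<lambda>k. - (- (t + real k) * phi (- (t + real k))))" if "0 < t" for t
    unfolding neg_terms using mult_gauss_shifted_lattice_sum(1)[of t] that
    by (simp add: summable_divide)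
  then obtain m s t where "0 \<le> s" "0 < t" and split:
    "sigma_deriv x = (\<Sum>k<m. - ((s + real k) * phi (s + real k)))
      + (\<Sum>k. - (- (t + real k) * phi (- (t + real k))))"
    unfolding sigma_deriv_def by (rule shifted_series_split_at_floor)
  define P where "P = (\<Sum>k<m. (s + real k) * gauss (s + real k))"
  define Q where "Q = (\<Sum>k. (t + real k) * gauss (t + real k))"
  have "(\<Sum>k. - (- (t + real k) * phi (- (t + real k)))) = Q / sqrt 2"
    unfolding Q_def neg_terms using mult_gauss_shifted_lattice_sum(1)[of t] \<open>0 < t\<close>
    by (simp add: suminf_divide)
  moreover have "(\<Sum>k<m. - ((s + real k) * phi (s + real k))) = - P / sqrt 2"
    unfolding P_def phi_eq_gauss by (simp add: sum_divide_distrib sum_negf)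
  ultimately have derivative: "sigma_deriv x = (Q - P) / sqrt 2"
    unfolding split by (simp add: diff_divide_distrib)
  have "P \<le> (\<Sum>k. (s + real k) * gauss (s + real k))"
    unfolding P_def using mult_gauss_shifted_lattice_sum(1)[OF \<open>0 \<le> s\<close>] \<open>0 \<le> s\<close>
    by (intro sum_le_suminf) (auto simp: gauss_pos less_imp_le)
  then have "P \<le> 1.41" using mult_gauss_shifted_lattice_sum(2)[OF \<open>0 \<le> s\<close>] by simp
  moreover have "0 \<le> P"
    unfolding P_def using \<open>0 \<le> s\<close> by (intro sum_nonneg) (simp add: gauss_pos less_imp_le)
  moreover have "Q \<le> 1.41" "0 \<le> Q"
    unfolding Q_def using mult_gauss_shifted_lattice_sum[of t] \<open>0 < t\<close>
    by (auto intro!: suminf_nonneg simp: gauss_pos less_imp_le)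
  ultimately have "\<bar>Q - P\<bar> \<le> sqrt 2" using sqrt_2_ge by linarith
  then show ?thesis by (simp add: derivative)
qed

lemma sigma_lipschitz: "1-lipschitz_on UNIV sigma"
proof (rule lipschitz_onI)
  show "dist (sigma x) (sigma y) \<le> 1 * dist x y" for x y
    unfolding dist_norm
  proof (rule field_differentiable_bound[OF convex_UNIV])
    show "(sigma has_field_derivative sigma_deriv z) (at z within UNIV)" for z
      by (simp add: sigma_has_derivative)
    show "norm (sigma_deriv z) \<le> 1" for z
      by (simp add: abs_sigma_deriv_le)
  qed auto
qed simp

lemma sigma_le_gauss:
  assumes "x \<le> 0"
  shows "sigma x \<le> 2 * gauss (1 - x)"
proof -
  have terms: "phi (x - real (Suc k)) = gauss (1 - x + real k) / sqrt 2" for k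
    using gauss_minus[of "1 - x + real k"] by (simp add: phi_eq_gauss algebra_simps)
  have bound: "gauss (1 - x + real k) / sqrt 2 \<le> gauss (1 - x) * gauss (real k)" for k
    by (rule order_trans[OF divide_sqrt_2_le gauss_add_le_mult])
      (use assms gauss_pos in \<open>auto simp: less_imp_le\<close>)
  have "sigma x = (\<Sum>k. gauss (1 - x + real k) / sqrt 2)"
    unfolding sigma_def terms ..
  also have "\<dots> \<le> (\<Sum>k. gauss (1 - x) * gauss (real k))"
    using bound gauss_shifted_lattice_sum(1)[of "1 - x"] gauss_lattice_sum(1) assms
    by (intro suminf_le summable_divide summable_mult) auto
  also have "\<dots> = gauss (1 - x) * (\<Sum>k. gauss (real k))"
    using gauss_lattice_sum(1) by (rule suminf_mult)
  also have "\<dots> \<le> gauss (1 - x) * 2"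
    using gauss_lattice_sum(2) gauss_pos[of "1 - x"] by (intro mult_left_mono) auto
  finally show ?thesis by simp
qed

lemma sigma_tendsto_at_bot: "(sigma \<longlongrightarrow> 0) at_bot"
proof (rule tendsto_sandwich)
  show "eventually (\<lambda>x. 0 \<le> sigma x) at_bot" by (simp add: sigma_nonneg)
  show "eventually (\<lambda>x. sigma x \<le> 2 * gauss (1 - x)) at_bot"
    using sigma_le_gauss by (auto simp: eventually_at_bot_linorder)
  show "((\<lambda>x. 2 * gauss (1 - x)) \<longlongrightarrow> 0) at_bot"
    unfolding gauss_def by real_asymp
qed simp

theorem lemma1:
  shows "1-lipschitz_on UNIV sigma \<and> (\<forall>x. 0 \<le> sigma x) \<and> (\<forall>x. sigma x \<le> 2.5)
         \<and> (sigma \<longlongrightarrow> 0) at_bot"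
  using sigma_lipschitz sigma_nonneg sigma_le sigma_tendsto_at_bot by blast

end
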